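(* Let $\Delta$ be an environment and $\eta:\mathfrak X\to\mathcal P(\Sigma^{\le\omega})$ with $\eta\models\Delta$. Let $f\in\mathcal F$, $U\subseteq\Sigma^*$, let $X\in\mathfrak X$ be a variable not used by any binding of $\Delta$, and let $V_0\subseteq\Sigma^{\le\omega}$ be such that $f\uparrow w$ implies $w\in V_0$ for all traces $w$. Put $\eta'=\eta[X\mapsto V_0]$. If $\Delta, f\ \&\ (U,X)\vdash e_f\ \&\ (U, A\cdot X\cup V(\mathfrak X-X))$ is derivable for some $A\subseteq\Sigma^*$ and some expression $V(\mathfrak X-X)$, then $\eta'\models \Delta, f\ \&\ (U,X)$.
   Context: Fix a finite alphabet $\Sigma$ of events; $\Sigma^*$ and $\Sigma^\omega$ are the finite and infinite words, $\Sigma^{\le\omega}=\Sigma^*\cup\Sigma^\omega$. For words $w,u$, $w\cdot u=wu$ if $w$ is finite and $w\cdot u=w$ if $w$ is infinite; concatenation of languages is pointwise. Expressions: $e::=o(a)\mid f\mid e_1;e_2\mid e_1?e_2$ with $a\in\Sigma$ and $f$ a procedure name. A program is a finite set $\mathcal F$ of procedure names together with a defining expression $e_f$ for each $f\in\mathcal F$ using only names from $\mathcal F$ (recursion allowed); such a program is fixed. Trace semantics: let $\checkmark\notin\Sigma$. The relations $e\Downarrow w$ and $e\Uparrow w$, for $w\in(\Sigma\uplus\{\checkmark\})^*$, are the least relations closed under: $o(a)\Downarrow a$; $o(a)\Uparrow a$; $e\Uparrow\epsilon$ for every $e$; if $e_f\Downarrow w$ then $f\Downarrow w$; if $e_f\Uparrow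 w$ then $f\Uparrow\checkmark w$; if $e_1\Downarrow w$ and $e_2\Downarrow u$ then $e_1;e_2\Downarrow wu$; if $e_1\Downarrow w$ and $e_2\Uparrow u$ then $e_1;e_2\Uparrow wu$; if $e_1\Uparrow w$ then $e_1;e_2\Uparrow w$; if $e_1\Downarrow w$ or $e_2\Downarrow w$ then $e_1?e_2\Downarrow w$; if $e_1\Uparrow w$ or $e_2\Uparrow w$ then $e_1?e_2\Uparrow w$. Let $\theta$ delete all occurrences of $\checkmark$ from a word. Then $e\downarrow w$ iff $w=\theta(w')$ for some $w'\in(\Sigma\uplus\{\checkmark\})^*$ with $e\Downarrow w'$; and $e\uparrow w$ iff $w=\theta(w')$ for some infinite $w'\in(\Sigma\uplus\{\checkmark\})^\omega$ such that $e\Uparrow u$ for every finite prefix $u$ of $w'$. Let $\mathfrak X$ be a set of variables. For $A\subseteq\Sigma^*$, $A^*$ is the Kleene star and $A^\omega$ is the set of all words $w_0\cdot w_1\cdot w_2\cdots$ with all $w_i\in A$. An expression $V(\mathfrak X)$ is a formal expression $\bigcup_{Y\in\mathfrak X}(A_Y\cdot Y)\cup B$ with $A_Y\subseteq\Sigma^*$, $B\subseteq\Sigma^{\le\omega}$; $V(\mathfrak X-X)$ denotes such an expression with $A_X=\emptyset$; the variable $X$ denotes the expression with $A_X=\{\epsilon\}$, other $A_Y=\emptyset$, $B=\emptyset$; a language $B$ denotes the expression with all $A_Y=\emptyset$. Operations: $A\cdot V(\mathfrak X)=\bigcup_Y((A\cdot A_Y)\cdot Y)\cup(A\cdot B)$,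 $V\cup V'$ componentwise. For $\eta:\mathfrak X\to\mathcal P(\Sigma^{\le\omega})$, $V(\eta)=\bigcup_Y A_Y\cdot\eta(Y)\cup B$. An environment $\Delta$ is a finite set of bindings $f\ \&\ (U,X)$ with $f\in\mathcal F$, $U\subseteq\Sigma^*$, $X\in\mathfrak X$, distinct bindings using distinct variables. Judgements $\Delta\vdash e\ \&\ (U,V(\mathfrak X))$ are derived by: (i) $\Delta\vdash o(a)\ \&\ (\{a\},\emptyset)$; (ii) from $\Delta\vdash e_1\ \&\ (U_1,V_1(\mathfrak X))$ and $\Delta\vdash e_2\ \&\ (U_2,V_2(\mathfrak X))$ infer $\Delta\vdash e_1;e_2\ \&\ (U_1\cdot U_2, V_1(\mathfrak X)\cup U_1\cdot V_2(\mathfrak X))$; (iii) from the same premises infer $\Delta\vdash e_1?e_2\ \&\ (U_1\cup U_2, V_1(\mathfrak X)\cup V_2(\mathfrak X))$; (iv) $\Delta,f\ \&\ (U,X)\vdash f\ \&\ (U,X)$; (v) from $\Delta, f\ \&\ (U,X)\vdash e_f\ \&\ (U,A\cdot X\cup V(\mathfrak X-X))$ infer $\Delta\vdash f\ \&\ (U,A^*\cdot V(\mathfrak X-X)\cup A^\omega)$. $\Delta$ is justified if for every binding $f\ \&\ (U,X)$ in $\Delta$ there are $A$, $V(\mathfrak X-X)$ with $\Delta\vdash e_f\ \&\ (U,A\cdot X\cup V(\mathfrak X-X))$. We write $\eta\models\Delta$ if $\Delta$ is justified and for every binding $g\ \&\ (U',Y)$ in $\Delta$ and every $w$ with $g\uparrow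 w$ we have $w\in\eta(Y)$. *)

theory Defs
  imports Main
begin

datatype 'a word = Fin "'a list" | Inf "nat \<Rightarrow> 'a"

fun prepend :: "'a list \<Rightarrow> 'a word \<Rightarrow> 'a word" where
  "prepend w (Fin u) = Fin (w @ u)"
| "prepend w (Inf s) = Inf (\<lambda>n. if n < length w then w ! n else s (n - length w))"

fun wcat :: "'a word \<Rightarrow> 'a word \<Rightarrow> 'a word" where
  "wcat (Fin w) u = prepend w u"
| "wcat (Inf s) u = Inf s"

definition lcat :: "'a list set \<Rightarrow> 'a list set \<Rightarrow> 'a list set" where
  "lcat A B = {w @ u | w u. w \<in> A \<and> u \<in> B}"

definition lwcat :: "'a list set \<Rightarrow> 'a word set \<Rightarrow> 'a word set" where
  "lwcat A B = {prepend w u | w u. w \<in> A \<and> u \<in> B}"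

definition ocat :: "(nat \<Rightarrow> 'a list) \<Rightarrow> 'a word" where
  "ocat ws = (if \<exists>N. \<forall>i\<ge>N. ws i = []
     then Fin (concat (map ws [0..<(LEAST N. \<forall>i\<ge>N. ws i = [])]))
     else Inf (\<lambda>n. let k = (LEAST k. n < length (concat (map ws [0..<k])))
                   in concat (map ws [0..<k]) ! n))"

definition kstar :: "'a list set \<Rightarrow> 'a list set" where
  "kstar A = {concat ws | ws. set ws \<subseteq> A}"

definition lomega :: "'a list set \<Rightarrow> 'a word set" where
  "lomega A = {ocat ws | ws. \<forall>i. ws i \<in> A}"

datatype ('a, 'f) expr = Op 'a | Call 'f | Seq "('a, 'f) expr" "('a, 'f) expr"
  | Choice "('a, 'f) expr" "('a, 'f) expr"

datatype 'a tev = Ev 'a | Tick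

fun theta :: "'a tev list \<Rightarrow> 'a list" where
  "theta [] = []"
| "theta (Ev a # w) = a # theta w"
| "theta (Tick # w) = theta w"

definition theta_inf :: "(nat \<Rightarrow> 'a tev) \<Rightarrow> 'a word" where
  "theta_inf s = ocat (\<lambda>i. theta [s i])"

inductive conv :: "('f \<Rightarrow> ('a, 'f) expr) \<Rightarrow> ('a, 'f) expr \<Rightarrow> 'a tev list \<Rightarrow> bool"
  for body where
  conv_op: "conv body (Op a) [Ev a]"
| conv_call: "conv body (body f) w \<Longrightarrow> conv body (Call f) w"
| conv_seq: "conv body e1 w \<Longrightarrow> conv body e2 u \<Longrightarrow> conv body (Seq e1 e2) (w @ u)"
| conv_ch1: "conv body e1 w \<Longrightarrow> conv body (Choice e1 e2) w"
| conv_ch2: "conv body e2 w \<Longrightarrow> conv body (Choice e1 e2) w"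

inductive divg :: "('f \<Rightarrow> ('a, 'f) expr) \<Rightarrow> ('a, 'f) expr \<Rightarrow> 'a tev list \<Rightarrow> bool"
  for body where
  divg_op: "divg body (Op a) [Ev a]"
| divg_eps: "divg body e []"
| divg_call: "divg body (body f) w \<Longrightarrow> divg body (Call f) (Tick # w)"
| divg_seq2: "conv body e1 w \<Longrightarrow> divg body e2 u \<Longrightarrow> divg body (Seq e1 e2) (w @ u)"
| divg_seq1: "divg body e1 w \<Longrightarrow> divg body (Seq e1 e2) w"
| divg_ch1: "divg body e1 w \<Longrightarrow> divg body (Choice e1 e2) w"
| divg_ch2: "divg body e2 w \<Longrightarrow> divg body (Choice e1 e2) w"

definition conv_trace :: "('f \<Rightarrow> ('a, 'f) expr) \<Rightarrow> ('a, 'f) expr \<Rightarrow> 'a list \<Rightarrow> bool" where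
  "conv_trace body e w \<longleftrightarrow> (\<exists>w'. conv body e w' \<and> w = theta w')"

definition div_trace :: "('f \<Rightarrow> ('a, 'f) expr) \<Rightarrow> ('a, 'f) expr \<Rightarrow> 'a word \<Rightarrow> bool" where
  "div_trace body e w \<longleftrightarrow>
     (\<exists>s. (\<forall>n. divg body e (map s [0..<n])) \<and> w = theta_inf s)"

text \<open>A formal expression (UN Y. A_Y . Y) Un B is represented by the pair (A, B).\<close>
type_synonym ('a, 'x) vexpr = "('x \<Rightarrow> 'a list set) \<times> 'a word set"

definition vvar :: "'x \<Rightarrow> ('a, 'x) vexpr" where
  "vvar X = ((\<lambda>Y. if Y = X then {[]} else {}), {})"

definition vlang :: "'a word set \<Rightarrow> ('a, 'x) vexpr" where
  "vlang B = ((\<lambda>Y. {}), B)"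

definition vsmult :: "'a list set \<Rightarrow> ('a, 'x) vexpr \<Rightarrow> ('a, 'x) vexpr" where
  "vsmult A V = ((\<lambda>Y. lcat A (fst V Y)), lwcat A (snd V))"

definition vunion :: "('a, 'x) vexpr \<Rightarrow> ('a, 'x) vexpr \<Rightarrow> ('a, 'x) vexpr" where
  "vunion V V' = ((\<lambda>Y. fst V Y \<union> fst V' Y), snd V \<union> snd V')"

text \<open>V(X - X0): the coefficient of X0 is empty.\<close>
definition free_of :: "'x \<Rightarrow> ('a, 'x) vexpr \<Rightarrow> bool" where
  "free_of X V \<longleftrightarrow> fst V X = {}"

definition veval :: "('a, 'x) vexpr \<Rightarrow> ('x \<Rightarrow> 'a word set) \<Rightarrow> 'a word set" where
  "veval V \<eta> = (\<Union>Y. lwcat (fst V Y) (\<eta> Y)) \<union> snd V"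

type_synonym ('f, 'a, 'x) binding = "'f \<times> 'a list set \<times> 'x"

definition bvars :: "('f, 'a, 'x) binding set \<Rightarrow> 'x set" where
  "bvars \<Delta> = (\<lambda>(f, U, X). X) ` \<Delta>"

definition env :: "('f, 'a, 'x) binding set \<Rightarrow> bool" where
  "env \<Delta> \<longleftrightarrow> finite \<Delta> \<and>
     (\<forall>b1\<in>\<Delta>. \<forall>b2\<in>\<Delta>. snd (snd b1) = snd (snd b2) \<longrightarrow> b1 = b2)"

text \<open>Judgement Delta |- e & (U, V). The extension "Delta, f & (U, X)" is insert (f,U,X) Delta
  with X not used in Delta.\<close>
inductive derives :: "('f \<Rightarrow> ('a, 'f) expr) \<Rightarrow> ('f, 'a, 'x) binding set \<Rightarrow> ('a, 'f) expr
    \<Rightarrow> 'a list set \<Rightarrow> ('a, 'x) vexpr \<Rightarrow> bool"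
  for body where
  der_op: "env \<Delta> \<Longrightarrow> derives body \<Delta> (Op a) {[a]} (vlang {})"
| der_seq: "derives body \<Delta> e1 U1 V1 \<Longrightarrow> derives body \<Delta> e2 U2 V2 \<Longrightarrow>
    derives body \<Delta> (Seq e1 e2) (lcat U1 U2) (vunion V1 (vsmult U1 V2))"
| der_choice: "derives body \<Delta> e1 U1 V1 \<Longrightarrow> derives body \<Delta> e2 U2 V2 \<Longrightarrow>
    derives body \<Delta> (Choice e1 e2) (U1 \<union> U2) (vunion V1 V2)"
| der_var: "env \<Delta> \<Longrightarrow> (f, U, X) \<in> \<Delta> \<Longrightarrow> derives body \<Delta> (Call f) U (vvar X)"
| der_rec: "X \<notin> bvars \<Delta> \<Longrightarrow> free_of X V \<Longrightarrow>
    derives body (insert (f, U, X) \<Delta>) (body f) U (vunion (vsmult A (vvar X)) V) \<Longrightarrow>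
    derives body \<Delta> (Call f) U (vunion (vsmult (kstar A) V) (vlang (lomega A)))"

definition justified :: "('f \<Rightarrow> ('a, 'f) expr) \<Rightarrow> ('f, 'a, 'x) binding set \<Rightarrow> bool" where
  "justified body \<Delta> \<longleftrightarrow>
     (\<forall>(f, U, X)\<in>\<Delta>. \<exists>A V. free_of X V \<and>
        derives body \<Delta> (body f) U (vunion (vsmult A (vvar X)) V))"

definition models :: "('f \<Rightarrow> ('a, 'f) expr) \<Rightarrow> ('x \<Rightarrow> 'a word set)
    \<Rightarrow> ('f, 'a, 'x) binding set \<Rightarrow> bool" where
  "models body \<eta> \<Delta> \<longleftrightarrow> justified body \<Delta> \<and>
     (\<forall>(g, U', Y)\<in>\<Delta>. \<forall>w. div_trace body (Call g) w \<longrightarrow> w \<in> \<eta> Y)"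

end

theory Submission
  imports Defs
begin

text \<open>Apart from bookkeeping, one must show that judgements derived in \<Delta> remain derivable
  in the extended environment. This is not literal weakening, since the recursion rule binds
  a variable fresh only for the smaller environment; but judgements are monotone up to renaming
  of variables: the bound variable of each recursion rule is renamed to one fresh for the larger
  environment (there are infinitely many variables), and the renaming cannot capture anything
  because every variable with a non-empty coefficient is bound in the environment.\<close>

definition rename_vars :: "('x \<Rightarrow> 'x) \<Rightarrow> ('a, 'x) vexpr \<Rightarrow> ('a, 'x) vexpr" where
  "rename_vars \<sigma> V = ((\<lambda>Y. \<Union>Z\<in>{Z. \<sigma> Z = Y}. fst V Z), snd V)"

definition rename_bindings ::
    "('x \<Rightarrow> 'x) \<Rightarrow> ('f, 'a, 'x) binding set \<Rightarrow> ('f, 'a, 'x) binding set" where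
  "rename_bindings \<sigma> \<Delta> = (\<lambda>(f, U, X). (f, U, \<sigma> X)) ` \<Delta>"

lemma rename_vars_vunion [simp]:
  "rename_vars \<sigma> (vunion V W) = vunion (rename_vars \<sigma> V) (rename_vars \<sigma> W)"
  by (auto simp: rename_vars_def vunion_def)

lemma rename_vars_vsmult [simp]: "rename_vars \<sigma> (vsmult A V) = vsmult A (rename_vars \<sigma> V)"
  by (auto simp: rename_vars_def vsmult_def lcat_def)

lemma rename_vars_vvar [simp]: "rename_vars \<sigma> (vvar X) = vvar (\<sigma> X)"
  unfolding rename_vars_def vvar_def by (rule prod_eqI) (auto split: if_splits)

lemma rename_vars_vlang [simp]: "rename_vars \<sigma> (vlang B) = vlang B"
  by (auto simp: rename_vars_def vlang_def)

lemma rename_vars_id [simp]: "rename_vars id V = V"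
  by (auto simp: rename_vars_def)

lemma rename_vars_upd_free:
  "free_of X V \<Longrightarrow> rename_vars (\<sigma>(X := X')) V = rename_vars \<sigma> V"
  unfolding rename_vars_def free_of_def by (rule prod_eqI) (auto intro!: ext split: if_splits)

lemma free_of_rename_vars:
  assumes "free_of X V"
    and "\<And>Y. fst V Y \<noteq> {} \<Longrightarrow> Y \<in> insert X B"
    and "\<sigma> ` B \<subseteq> B'" and "X' \<notin> B'"
  shows "free_of X' (rename_vars (\<sigma>(X := X')) V)"
proof -
  have "fst V Z = {}" if "(\<sigma>(X := X')) Z = X'" for Z
  proof (rule ccontr)
    assume "fst V Z \<noteq> {}"
    with assms(1,2) have "Z \<noteq> X" and "Z \<in> B" by (auto simp: free_of_def)
    with that assms(3,4) show False by auto
  qed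
  then show ?thesis by (simp add: free_of_def rename_vars_def)
qed

lemma rename_bindings_id [simp]: "rename_bindings id \<Delta> = \<Delta>"
  by (auto simp: rename_bindings_def)

lemma bvars_rename_bindings: "bvars (rename_bindings \<sigma> \<Delta>) = \<sigma> ` bvars \<Delta>"
  by (force simp: bvars_def rename_bindings_def)

lemma bvars_insert [simp]: "bvars (insert (f, U, X) \<Delta>) = insert X (bvars \<Delta>)"
  by (simp add: bvars_def)

lemma bvars_mono: "\<Delta> \<subseteq> \<Delta>' \<Longrightarrow> bvars \<Delta> \<subseteq> bvars \<Delta>'"
  unfolding bvars_def by (rule image_mono)

lemma rename_bindings_insert_fresh:
  assumes "X \<notin> bvars \<Delta>"
  shows "rename_bindings (\<sigma>(X := X')) (insert (f, U, X) \<Delta>)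
    = insert (f, U, X') (rename_bindings \<sigma> \<Delta>)"
proof -
  have "\<forall>(g, U', Y)\<in>\<Delta>. Y \<noteq> X"
    using assms by (force simp: bvars_def)
  then have "(\<lambda>(g, U', Y). (g, U', (\<sigma>(X := X')) Y)) ` \<Delta> = (\<lambda>(g, U', Y). (g, U', \<sigma> Y)) ` \<Delta>"
    by (intro image_cong) auto
  then show ?thesis by (simp add: rename_bindings_def)
qed

lemma env_insert: "env \<Delta> \<Longrightarrow> X \<notin> bvars \<Delta> \<Longrightarrow> env (insert (f, U, X) \<Delta>)"
  unfolding env_def bvars_def by force

lemma finite_bvars: "env \<Delta> \<Longrightarrow> finite (bvars \<Delta>)"
  unfolding env_def bvars_def by auto

lemma derives_coeff_bound:
  "derives body \<Delta> e U V \<Longrightarrow> fst V Y \<noteq> {} \<Longrightarrow> Y \<in> bvars \<Delta>"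
proof (induction arbitrary: Y rule: derives.induct)
  case (der_op \<Delta> a)
  then show ?case by (simp add: vlang_def)
next
  case (der_seq \<Delta> e1 U1 V1 e2 U2 V2)
  then show ?case by (auto simp: vunion_def vsmult_def lcat_def)
next
  case (der_choice \<Delta> e1 U1 V1 e2 U2 V2)
  then show ?case by (auto simp: vunion_def)
next
  case (der_var \<Delta> f U X)
  then show ?case by (force simp: vvar_def bvars_def split: if_splits)
next
  case (der_rec X \<Delta> V f U A)
  from der_rec.prems have "fst V Y \<noteq> {}"
    by (auto simp: vunion_def vsmult_def vlang_def lcat_def)
  then have "Y \<in> insert X (bvars \<Delta>)"
    using der_rec.IH[of Y] by (auto simp: vunion_def)
  moreover have "Y \<noteq> X" using der_rec.hyps(2) \<open>fst V Y \<noteq> {}\<close> by (auto simp: free_of_def)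
  ultimately show ?case by simp
qed

lemma derives_rename:
  assumes "infinite (UNIV :: 'x set)"
  shows "derives body \<Delta> e U V \<Longrightarrow> env \<Delta>' \<Longrightarrow> rename_bindings \<sigma> \<Delta> \<subseteq> \<Delta>'
    \<Longrightarrow> derives body \<Delta>' e U (rename_vars \<sigma> (V :: ('a, 'x) vexpr))"
proof (induction arbitrary: \<sigma> \<Delta>' rule: derives.induct)
  case (der_op \<Delta> a)
  then show ?case by (simp add: derives.der_op)
next
  case (der_seq \<Delta> e1 U1 V1 e2 U2 V2)
  then show ?case by (simp add: derives.der_seq)
next
  case (der_choice \<Delta> e1 U1 V1 e2 U2 V2)
  then show ?case by (simp add: derives.der_choice)
next
  case (der_var \<Delta> f U X)
  then have "(f, U, \<sigma> X) \<in> \<Delta>'" by (force simp: rename_bindings_def)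
  with der_var show ?case by (simp add: derives.der_var)
next
  case (der_rec X \<Delta> V f U A)
  obtain X' where X': "X' \<notin> bvars \<Delta>'"
    using ex_new_if_finite[OF assms finite_bvars[OF der_rec.prems(1)]] by blast
  let ?\<sigma> = "\<sigma>(X := X')"
  have "rename_bindings ?\<sigma> (insert (f, U, X) \<Delta>) \<subseteq> insert (f, U, X') \<Delta>'"
    using der_rec.prems(2) by (auto simp: rename_bindings_insert_fresh[OF der_rec.hyps(1)])
  from der_rec.IH[OF env_insert[OF der_rec.prems(1) X'] this]
  have body: "derives body (insert (f, U, X') \<Delta>') (body f) U
      (vunion (vsmult A (vvar X')) (rename_vars ?\<sigma> V))"
    by (simp only: rename_vars_vunion rename_vars_vsmult rename_vars_vvar fun_upd_same)
  have "\<sigma> ` bvars \<Delta> \<subseteq> bvars \<Delta>'"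
    using bvars_mono[OF der_rec.prems(2)] by (simp add: bvars_rename_bindings)
  moreover have "Y \<in> insert X (bvars \<Delta>)" if "fst V Y \<noteq> {}" for Y
    using derives_coeff_bound[OF der_rec.hyps(3)] that by (auto simp: vunion_def)
  ultimately have "free_of X' (rename_vars ?\<sigma> V)"
    using free_of_rename_vars[OF der_rec.hyps(2) _ _ X'] by blast
  from derives.der_rec[OF X' this body] show ?case
    by (simp add: rename_vars_upd_free[OF der_rec.hyps(2)])
qed

corollary derives_mono_env:
  assumes "infinite (UNIV :: 'x set)"
    and "derives body \<Delta> e U (V :: ('a, 'x) vexpr)" and "env \<Delta>'" and "\<Delta> \<subseteq> \<Delta>'"
  shows "derives body \<Delta>' e U V"
  using derives_rename[OF assms(1,2,3), of id] assms(4) by simp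

lemma justified_insert:
  assumes "infinite (UNIV :: 'x set)"
    and "justified body \<Delta>" and "env \<Delta>" and "X \<notin> bvars \<Delta>" and "free_of X V"
    and "derives body (insert (f, U, X) \<Delta>) (body f) U (vunion (vsmult A (vvar X)) V)"
  shows "justified body (insert (f, U, X :: 'x) \<Delta>)"
proof -
  have "\<exists>A V. free_of Y V \<and>
      derives body (insert (f, U, X) \<Delta>) (body g) U' (vunion (vsmult A (vvar Y)) V)"
    if binding: "(g, U', Y) \<in> \<Delta>" for g U' Y
  proof -
    obtain A' V' where "free_of Y V'"
      and "derives body \<Delta> (body g) U' (vunion (vsmult A' (vvar Y)) V')"
      using bspec[OF assms(2)[unfolded justified_def] binding] by auto
    with derives_mono_env[OF assms(1) _ env_insert[OF assms(3,4)] subset_insertI] show ?thesis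
      by blast
  qed
  with assms(5,6) show ?thesis
    unfolding justified_def by (auto simp del: split_paired_Ex)
qed

lemma models_insert:
  assumes "models body \<eta> \<Delta>" and "X \<notin> bvars \<Delta>"
    and "\<forall>w. div_trace body (Call f) w \<longrightarrow> w \<in> V0"
    and "justified body (insert (f, U, X) \<Delta>)"
  shows "models body (\<eta>(X := V0)) (insert (f, U, X) \<Delta>)"
  unfolding models_def
proof (intro conjI ballI)
  fix b assume "b \<in> insert (f, U, X) \<Delta>"
  moreover obtain g U' Y where b: "b = (g, U', Y)" by (cases b)
  ultimately consider "(g, U', Y) = (f, U, X)" | "(g, U', Y) \<in> \<Delta>" by blast
  then show "case b of (g, U', Y) \<Rightarrow> \<forall>w. div_trace body (Call g) w \<longrightarrow> w \<in> (\<eta>(X := V0)) Y"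
  proof cases
    case 1
    with assms(3) show ?thesis by (simp add: b)
  next
    case 2
    then have "Y \<noteq> X" using assms(2) by (force simp: bvars_def)
    with 2 assms(1) show ?thesis by (auto simp: b models_def)
  qed
qed (rule assms(4))

theorem lemma2:
  fixes body :: "'f::finite \<Rightarrow> ('a::finite, 'f) expr"
    and \<Delta> :: "('f, 'a, 'x) binding set"
    and \<eta> :: "'x \<Rightarrow> 'a word set"
    and f :: 'f and U :: "'a list set" and X :: 'x and V0 :: "'a word set"
    and A :: "'a list set" and V :: "('a, 'x) vexpr"
  assumes "infinite (UNIV :: 'x set)"
    and "env \<Delta>"
    and "models body \<eta> \<Delta>"
    and "X \<notin> bvars \<Delta>"
    and "\<forall>w. div_trace body (Call f) w \<longrightarrow> w \<in> V0"
    and "free_of X V"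
    and "derives body (insert (f, U, X) \<Delta>) (body f) U (vunion (vsmult A (vvar X)) V)"
  shows "models body (\<eta>(X := V0)) (insert (f, U, X) \<Delta>)"
  using models_insert[OF assms(3,4,5)] justified_insert[OF assms(1) _ assms(2,4,6,7)] assms(3)
  by (simp add: models_def)

end
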